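(* Let $A=\mathrm{diag}([-1],G_1,\dots,G_m,[1])\in\mathbb{R}^{n\times n}$, $m\geq 1$ (each of $[-1]$, $[1]$ possibly absent), with $G_j=\begin{bmatrix}c_j&s_j\\-s_j&c_j\end{bmatrix}$, $c_j^2+s_j^2=1$, $s_j\neq0$, $-1=c_0<c_1<\cdots<c_m<1=c_{m+1}$. Let $v_0$ be a unit norm vector with $d(A,v_0)\geq 2$ such that $v_0^{(\ell)}\neq 0$ for some $1\leq\ell\leq m$ and $v_0^{(j)}\neq 0$ for some present block index $0\leq j\leq m+1$ with $c_\ell c_j\leq 0$. Then every limit vector $v_*$ of the sequence $\{v_k\}$ of the iteration ACI($1$) below satisfies $v_*^TAv_*=0$, $\|Av_*\|^2-(v_*^TAv_* )^2=1$, and $$\min_{\alpha\in\mathbb{R}}\|A-\alpha I\|=\|A\|=\|Av_*\|=1.$$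
   Context: Block partitioning: $v=[v^{(0)};v^{(1)};\dots;v^{(m)};v^{(m+1)}]$ with $v^{(0)}\in\mathbb{R}$ present only if the block $[-1]$ is, $v^{(j)}\in\mathbb{R}^2$ for $1\leq j\leq m$ (conforming with $G_j$), and $v^{(m+1)}\in\mathbb{R}$ present only if the block $[1]$ is. ACI($1$): for $k=0,1,2,\dots$: $\widetilde w_k=(A-\alpha_kI)v_k$ with $\alpha_k=v_k^TAv_k$; $w_k=\widetilde w_k/\|\widetilde w_k\|$; $\widetilde v_{k+1}=(A^T-\beta_kI)w_k$ with $\beta_k=w_k^TAw_k$; $v_{k+1}=\widetilde v_{k+1}/\|\widetilde v_{k+1}\|$. $d(A,v)$ is the grade of $v$ w.r.t. $A$ (degree of the monic polynomial $p$ of smallest degree with $p(A)v=0$); $\|\cdot\|$ is the Euclidean vector norm and the induced spectral matrix norm. *)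

theory Defs
  imports Complex_Main
begin

text \<open>Vectors in R^n are functions nat => real (only indices < n matter);
  n x n matrices are functions nat => nat => real (only indices < n matter).\<close>

definition vinner :: "nat \<Rightarrow> (nat \<Rightarrow> real) \<Rightarrow> (nat \<Rightarrow> real) \<Rightarrow> real" where
  "vinner n x y = (\<Sum>i<n. x i * y i)"

definition vnorm :: "nat \<Rightarrow> (nat \<Rightarrow> real) \<Rightarrow> real" where
  "vnorm n x = sqrt (\<Sum>i<n. (x i)\<^sup>2)"

definition mv :: "nat \<Rightarrow> (nat \<Rightarrow> nat \<Rightarrow> real) \<Rightarrow> (nat \<Rightarrow> real) \<Rightarrow> (nat \<Rightarrow> real)" where
  "mv n M x = (\<lambda>i. if i < n then (\<Sum>k<n. M i k * x k) else 0)"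

definition mtrans :: "(nat \<Rightarrow> nat \<Rightarrow> real) \<Rightarrow> (nat \<Rightarrow> nat \<Rightarrow> real)" where
  "mtrans M = (\<lambda>i k. M k i)"

definition opnorm :: "nat \<Rightarrow> (nat \<Rightarrow> nat \<Rightarrow> real) \<Rightarrow> real" where
  "opnorm n M = Sup {vnorm n (mv n M x) | x. vnorm n x = 1}"

definition grade :: "nat \<Rightarrow> (nat \<Rightarrow> nat \<Rightarrow> real) \<Rightarrow> (nat \<Rightarrow> real) \<Rightarrow> nat" where
  "grade n M v = (LEAST k. \<exists>a :: nat \<Rightarrow> real.
      \<forall>i<n. ((mv n M ^^ k) v) i + (\<Sum>t<k. a t * ((mv n M ^^ t) v) i) = 0)"

text \<open>Block structure of A = diag([-1], G_1, ..., G_m, [1]); hasNeg / hasPos say whether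
  the blocks [-1] and [1] are present.\<close>
definition boff :: "bool \<Rightarrow> nat" where
  "boff hasNeg = (if hasNeg then 1 else 0)"

definition bdim :: "bool \<Rightarrow> bool \<Rightarrow> nat \<Rightarrow> nat" where
  "bdim hasNeg hasPos m = boff hasNeg + 2 * m + (if hasPos then 1 else 0)"

definition blockA :: "bool \<Rightarrow> bool \<Rightarrow> nat \<Rightarrow> (nat \<Rightarrow> real) \<Rightarrow> (nat \<Rightarrow> real)
    \<Rightarrow> nat \<Rightarrow> nat \<Rightarrow> real" where
  "blockA hasNeg hasPos m c s i k =
     (let off = boff hasNeg in
      if i < bdim hasNeg hasPos m \<and> k < bdim hasNeg hasPos m then
        (if hasNeg \<and> i = 0 then (if k = 0 then -1 else 0)
         else if hasPos \<and> i = off + 2 * m then (if k = i then 1 else 0)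
         else (let j = (i - off) div 2 + 1; p = off + 2 * (j - 1) in
               if i = p then (if k = p then c j else if k = p + 1 then s j else 0)
               else (if k = p then - s j else if k = p + 1 then c j else 0)))
      else 0)"

text \<open>Block j of v is present and nonzero (j = 0: block [-1]; 1 \<le> j \<le> m: G_j; j = m+1: block [1]).\<close>
definition block_nz :: "bool \<Rightarrow> bool \<Rightarrow> nat \<Rightarrow> (nat \<Rightarrow> real) \<Rightarrow> nat \<Rightarrow> bool" where
  "block_nz hasNeg hasPos m v j =
     (if j = 0 then hasNeg \<and> v 0 \<noteq> 0
      else if j = m + 1 then hasPos \<and> v (boff hasNeg + 2 * m) \<noteq> 0
      else if j \<le> m then (v (boff hasNeg + 2 * (j - 1)) \<noteq> 0 \<or> v (boff hasNeg + 2 * (j - 1) + 1) \<noteq> 0)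
      else False)"

definition aci_step :: "nat \<Rightarrow> (nat \<Rightarrow> nat \<Rightarrow> real) \<Rightarrow> (nat \<Rightarrow> real) \<Rightarrow> (nat \<Rightarrow> real)" where
  "aci_step n A v =
     (let \<alpha> = vinner n v (mv n A v);
          wt = (\<lambda>i. mv n A v i - \<alpha> * v i);
          w = (\<lambda>i. wt i / vnorm n wt);
          \<beta> = vinner n w (mv n A w);
          vt = (\<lambda>i. mv n (mtrans A) w i - \<beta> * w i)
      in (\<lambda>i. vt i / vnorm n vt))"

definition aci_seq :: "nat \<Rightarrow> (nat \<Rightarrow> nat \<Rightarrow> real) \<Rightarrow> (nat \<Rightarrow> real) \<Rightarrow> nat \<Rightarrow> (nat \<Rightarrow> real)" where
  "aci_seq n A v0 k = (aci_step n A ^^ k) v0"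

definition limit_vector :: "nat \<Rightarrow> (nat \<Rightarrow> nat \<Rightarrow> real) \<Rightarrow> (nat \<Rightarrow> real) \<Rightarrow> bool" where
  "limit_vector n vs vstar =
     (\<exists>r. strict_mono r \<and> (\<forall>i<n. (\<lambda>k. vs (r k) i) \<longlonglongrightarrow> vstar i))"

end

theory Submission
  imports Defs
begin

text \<open>
  \<open>A\<close> is orthogonal and acts on each block by a rotation or by \<open>\<plusminus>1\<close>. Measure a vector by its
  block masses \<open>P\<^sub>j\<close> (squared norms of its blocks). A half step of ACI(1) with Rayleigh quotient
  \<open>\<gamma>\<close> multiplies \<open>P\<^sub>j\<close> by \<open>(1 - 2\<gamma>c\<^sub>j + \<gamma>\<^sup>2) / (1 - \<gamma>\<^sup>2)\<close>, for \<open>A\<close> and \<open>A\<^sup>T\<close> alike.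
  Choose blocks \<open>x\<close>, \<open>y\<close> carrying mass with \<open>c\<^sub>x \<le> 0 \<le> c\<^sub>y\<close> and weights \<open>p, q \<ge> 0\<close>,
  \<open>p + q = 1\<close>, \<open>p (-c\<^sub>x) = q c\<^sub>y\<close>. Then \<open>L = p ln P\<^sub>x + q ln P\<^sub>y\<close> stays \<open>\<le> 0\<close> and grows in every
  half step by an amount that is nonnegative and bounded away from \<open>0\<close> as long as \<open>|\<gamma>|\<close> is, so the
  Rayleigh quotients \<open>\<alpha>\<^sub>k\<close> tend to \<open>0\<close>. A limit vector \<open>v\<^sub>*\<close> is thus a unit vector with
  \<open>v\<^sub>*\<^sup>T A v\<^sub>* = 0\<close>, and orthogonality of \<open>A\<close> gives \<open>\<parallel>(A - \<alpha>I) v\<^sub>*\<parallel>\<^sup>2 = 1 + \<alpha>\<^sup>2 \<ge> 1 = \<parallel>A\<parallel>\<close>.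
\<close>

section \<open>Block structure of \<open>A\<close>\<close>

lemma sum_lessThan_pairs:
  fixes g :: "nat \<Rightarrow> real"
  shows "(\<Sum>i<off + 2*m. g i) = (\<Sum>i<off. g i) + (\<Sum>j<m. g (off + 2*j) + g (off + 2*j + 1))"
  by (induction m) (simp_all add: algebra_simps)

lemma sum_blocks:
  fixes g :: "nat \<Rightarrow> real"
  shows "(\<Sum>i<bdim hN hP m. g i) = (if hN then g 0 else 0)
      + (\<Sum>j<m. g (boff hN + 2*j) + g (boff hN + 2*j + 1))
      + (if hP then g (boff hN + 2*m) else 0)"
  unfolding bdim_def by (simp add: sum_lessThan_pairs) (simp add: boff_def)

lemma block_index_cases:
  assumes "i < bdim hN hP m"
  obtains "hN" "i = 0"
    | j where "j < m" "i = boff hN + 2*j"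
    | j where "j < m" "i = boff hN + 2*j + 1"
    | "hP" "i = boff hN + 2*m"
proof -
  have "(hN \<and> i = 0) \<or> boff hN + 2*m \<le> i \<or> (boff hN \<le> i \<and> i < boff hN + 2*m)"
    by (auto simp: boff_def)
  then consider "hN" "i = 0" | "boff hN + 2*m \<le> i" | "boff hN \<le> i" "i < boff hN + 2*m"
    by blast
  then show thesis
  proof cases
    case 2
    then show thesis using assms that(4) by (cases hP) (auto simp: bdim_def)
  next
    case 3
    define j where "j = (i - boff hN) div 2"
    have "j < m" using 3 unfolding j_def by linarith
    moreover have "i = boff hN + 2*j \<or> i = boff hN + 2*j + 1" using 3 unfolding j_def by presburger
    ultimately show thesis using that(2,3) by blast
  qed (use that(1) in blast)
qed

lemma blockA_row_neg:
  "hN \<Longrightarrow> blockA hN hP m c s 0 k = (if k = 0 then -1 else 0)"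
  by (simp add: blockA_def bdim_def boff_def Let_def)

lemma blockA_row_pos:
  "hP \<Longrightarrow> blockA hN hP m c s (boff hN + 2*m) k = (if k = boff hN + 2*m then 1 else 0)"
  by (auto simp add: blockA_def bdim_def boff_def Let_def)

lemma blockA_row_rot1:
  "j < m \<Longrightarrow> blockA hN hP m c s (boff hN + 2*j) k =
    (if k = boff hN + 2*j then c (Suc j) else if k = boff hN + 2*j + 1 then s (Suc j) else 0)"
  by (auto simp add: blockA_def bdim_def boff_def Let_def)

text \<open>Indices \<open>boff hN + 2*j + 1\<close> are written \<open>Suc (boff hN + 2*j)\<close>, their simp normal form.\<close>

lemma blockA_row_rot2:
  "j < m \<Longrightarrow> blockA hN hP m c s (Suc (boff hN + 2*j)) k =
    (if k = boff hN + 2*j then - s (Suc j) else if k = boff hN + 2*j + 1 then c (Suc j) else 0)"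
  by (auto simp add: blockA_def bdim_def boff_def Let_def)

lemma blockA_outside:
  assumes "\<not> (i < bdim hN hP m \<and> k < bdim hN hP m)"
  shows "blockA hN hP m c s i k = 0"
proof -
  have "(i < bdim hN hP m \<and> k < bdim hN hP m) = False" using assms by simp
  then show ?thesis unfolding blockA_def Let_def by (simp only: if_False)
qed

lemma mtrans_blockA: "mtrans (blockA hN hP m c s) = blockA hN hP m c (\<lambda>j. - s j)"
proof (intro ext)
  fix i k
  show "mtrans (blockA hN hP m c s) i k = blockA hN hP m c (\<lambda>j. - s j) i k"
  proof (cases "i < bdim hN hP m \<and> k < bdim hN hP m")
    case True
    then have i: "i < bdim hN hP m" and k: "k < bdim hN hP m" by auto
    show ?thesis unfolding mtrans_def
      by (rule block_index_cases[OF i]; rule block_index_cases[OF k]; simp only:;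
          simp add: blockA_row_neg blockA_row_pos blockA_row_rot1 blockA_row_rot2; simp add: boff_def)
  qed (auto simp: mtrans_def blockA_outside)
qed

lemma sum_two_entries:
  fixes x y :: real and p n :: nat
  assumes "p + 1 < n"
  shows "(\<Sum>k<n. (if k = p then x else if k = p + 1 then y else 0) * u k) = x * u p + y * u (p + 1)"
proof -
  have "(\<Sum>k<n. (if k = p then x else if k = p + 1 then y else 0) * u k)
      = (\<Sum>k<n. (if k = p then x * u p else 0) + (if k = p + 1 then y * u (p + 1) else 0))"
    by (rule sum.cong) auto
  then show ?thesis using assms by (simp add: sum.distrib)
qed

lemma mv_blockA_neg: "hN \<Longrightarrow> mv (bdim hN hP m) (blockA hN hP m c s) u 0 = - u 0"
  by (simp add: mv_def blockA_row_neg bdim_def boff_def if_distrib[of "\<lambda>x. x * _"] cong: if_cong)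

lemma mv_blockA_pos:
  "hP \<Longrightarrow> mv (bdim hN hP m) (blockA hN hP m c s) u (boff hN + 2*m) = u (boff hN + 2*m)"
  by (simp add: mv_def blockA_row_pos bdim_def if_distrib[of "\<lambda>x. x * _"] cong: if_cong)

lemma mv_blockA_rot1:
  assumes "j < m"
  shows "mv (bdim hN hP m) (blockA hN hP m c s) u (boff hN + 2*j)
    = c (Suc j) * u (boff hN + 2*j) + s (Suc j) * u (boff hN + 2*j + 1)"
  using assms sum_two_entries[of "boff hN + 2*j" "bdim hN hP m" "c (Suc j)" "s (Suc j)" u]
  by (simp add: mv_def blockA_row_rot1 bdim_def)

lemma mv_blockA_rot2:
  assumes "j < m"
  shows "mv (bdim hN hP m) (blockA hN hP m c s) u (Suc (boff hN + 2*j))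
    = - s (Suc j) * u (boff hN + 2*j) + c (Suc j) * u (boff hN + 2*j + 1)"
  using assms sum_two_entries[of "boff hN + 2*j" "bdim hN hP m" "- s (Suc j)" "c (Suc j)" u]
  by (simp add: mv_def blockA_row_rot2 bdim_def)

section \<open>Block masses\<close>

text \<open>Blocks are numbered as in the paper: \<open>0\<close> is \<open>[-1]\<close>, \<open>1..m\<close> are the \<open>G\<^sub>j\<close>, \<open>m+1\<close> is \<open>[1]\<close>.
  \<open>block_mass\<close> is meaningful only for present blocks.\<close>

definition block_present :: "bool \<Rightarrow> bool \<Rightarrow> nat \<Rightarrow> nat \<Rightarrow> bool" where
  "block_present hN hP m j \<longleftrightarrow> j \<le> Suc m \<and> (j = 0 \<longrightarrow> hN) \<and> (j = Suc m \<longrightarrow> hP)"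

definition block_mass :: "bool \<Rightarrow> nat \<Rightarrow> (nat \<Rightarrow> real) \<Rightarrow> nat \<Rightarrow> real" where
  "block_mass hN m u j =
     (if j = 0 then (u 0)\<^sup>2
      else if j = Suc m then (u (boff hN + 2*m))\<^sup>2
      else (u (boff hN + 2*(j - 1)))\<^sup>2 + (u (boff hN + 2*(j - 1) + 1))\<^sup>2)"

lemma rotation_shift_sq:
  fixes c t \<gamma> x y :: real
  assumes "c\<^sup>2 + t\<^sup>2 = 1"
  shows "(c*x + t*y - \<gamma>*x)\<^sup>2 + (- t*x + c*y - \<gamma>*y)\<^sup>2 = (1 - 2*\<gamma>*c + \<gamma>\<^sup>2) * (x\<^sup>2 + y\<^sup>2)"
proof -
  have "(c*x + t*y - \<gamma>*x)\<^sup>2 + (- t*x + c*y - \<gamma>*y)\<^sup>2 = ((c\<^sup>2 + t\<^sup>2) - 2*\<gamma>*c + \<gamma>\<^sup>2) * (x\<^sup>2 + y\<^sup>2)"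
    by (simp add: power2_eq_square algebra_simps)
  then show ?thesis using assms by simp
qed

lemma block_present_cases:
  assumes "block_present hN hP m j"
  obtains "j = 0" "hN" | j' where "j' < m" "j = Suc j'" | "j = Suc m" "hP"
proof -
  consider "j = 0" | "j = Suc m" | j' where "j = Suc j'" "j' < m"
    using assms unfolding block_present_def by (cases j) (auto simp: le_Suc_eq)
  then show thesis using assms that unfolding block_present_def by cases auto
qed

lemma block_present_rotation: "l \<in> {1..m} \<Longrightarrow> block_present hN hP m l"
  unfolding block_present_def by auto

lemma block_present_cos_sq_le:
  fixes c s :: "nat \<Rightarrow> real"
  assumes "\<forall>j\<in>{1..m}. (c j)\<^sup>2 + (s j)\<^sup>2 = 1" "c 0 = -1" "c (Suc m) = 1" "block_present hN hP m j"
  shows "(c j)\<^sup>2 \<le> 1"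
  using assms(4)
proof (cases rule: block_present_cases)
  case (2 j')
  then have "(c j)\<^sup>2 + (s j)\<^sup>2 = 1" using assms(1) by auto
  then show ?thesis using zero_le_power2[of "s j"] by linarith
qed (use assms in simp_all)

lemma block_mass_shift:
  assumes ct: "\<forall>j\<in>{1..m}. (c j)\<^sup>2 + (t j)\<^sup>2 = 1" and c0: "c 0 = -1" and cm: "c (Suc m) = 1"
    and j: "block_present hN hP m j"
  shows "block_mass hN m (\<lambda>i. mv (bdim hN hP m) (blockA hN hP m c t) u i - \<gamma> * u i) j
    = (1 - 2*\<gamma>*c j + \<gamma>\<^sup>2) * block_mass hN m u j"
  using j
proof (cases rule: block_present_cases)
  case 1
  then show ?thesis using c0 by (simp add: block_mass_def mv_blockA_neg power2_eq_square algebra_simps)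
next
  case (2 j')
  have "(c j)\<^sup>2 + (t j)\<^sup>2 = 1" using ct 2 by auto
  from rotation_shift_sq[OF this] show ?thesis
    using 2 by (simp add: block_mass_def mv_blockA_rot1 mv_blockA_rot2)
next
  case 3
  with mv_blockA_pos[OF \<open>hP\<close>] show ?thesis
    using cm by (simp add: block_mass_def power2_eq_square algebra_simps)
qed

lemma sum_sq_mv_blockA:
  assumes ct: "\<forall>j\<in>{1..m}. (c j)\<^sup>2 + (t j)\<^sup>2 = 1"
  shows "(\<Sum>i<bdim hN hP m. (mv (bdim hN hP m) (blockA hN hP m c t) u i)\<^sup>2) = (\<Sum>i<bdim hN hP m. (u i)\<^sup>2)"
proof -
  have "(mv (bdim hN hP m) (blockA hN hP m c t) u (boff hN + 2*j))\<^sup>2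
      + (mv (bdim hN hP m) (blockA hN hP m c t) u (boff hN + 2*j + 1))\<^sup>2
      = (u (boff hN + 2*j))\<^sup>2 + (u (boff hN + 2*j + 1))\<^sup>2" if "j < m" for j
  proof -
    have "(c (Suc j))\<^sup>2 + (t (Suc j))\<^sup>2 = 1" using ct that by auto
    from rotation_shift_sq[OF this, of "u (boff hN + 2*j)" "u (boff hN + 2*j + 1)" 0] show ?thesis
      using that by (simp add: mv_blockA_rot1 mv_blockA_rot2)
  qed
  then show ?thesis
    by (simp add: sum_blocks[of _ hN hP m] mv_blockA_neg mv_blockA_pos)
qed

lemma block_mass_le_sum_sq:
  assumes "block_present hN hP m j"
  shows "block_mass hN m u j \<le> (\<Sum>i<bdim hN hP m. (u i)\<^sup>2)"
proof -
  let ?neg = "if hN then (u 0)\<^sup>2 else 0"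
  let ?pair = "\<lambda>j. (u (boff hN + 2*j))\<^sup>2 + (u (boff hN + 2*j + 1))\<^sup>2"
  let ?pos = "if hP then (u (boff hN + 2*m))\<^sup>2 else 0"
  have total: "(\<Sum>i<bdim hN hP m. (u i)\<^sup>2) = ?neg + sum ?pair {..<m} + ?pos"
    by (rule sum_blocks)
  have nonneg: "0 \<le> ?neg" "0 \<le> sum ?pair {..<m}" "0 \<le> ?pos"
    by (simp_all add: sum_nonneg)
  from assms consider "block_mass hN m u j = ?neg" | j' where "j' < m" "block_mass hN m u j = ?pair j'"
    | "block_mass hN m u j = ?pos"
    by (cases rule: block_present_cases) (auto simp: block_mass_def)
  then show ?thesis
  proof cases
    case (2 j')
    then have "?pair j' \<le> sum ?pair {..<m}" by (intro member_le_sum) auto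
    then show ?thesis using 2 total nonneg by linarith
  qed (use total nonneg in linarith)+
qed

lemma block_mass_divide: "block_mass hN m (\<lambda>i. w i / d) j = block_mass hN m w j / d\<^sup>2"
  by (simp add: block_mass_def power_divide add_divide_distrib)

lemma block_nz_imp_mass_pos:
  assumes "block_nz hN hP m v j"
  shows "block_present hN hP m j" "block_mass hN m v j > 0"
proof -
  have "j \<le> Suc m" using assms by (auto simp: block_nz_def split: if_splits)
  then show "block_present hN hP m j" using assms by (auto simp: block_nz_def block_present_def)
  show "block_mass hN m v j > 0" using assms
    by (auto simp: block_nz_def block_mass_def add_pos_nonneg add_nonneg_pos split: if_splits)
qed

section \<open>Half steps of ACI(1)\<close>

lemma vinner_mtrans: "vinner n w (mv n (mtrans M) w) = vinner n w (mv n M w)"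
proof -
  have "vinner n w (mv n (mtrans M) w) = (\<Sum>i<n. \<Sum>k<n. w i * (M k i * w k))"
    unfolding vinner_def mv_def mtrans_def by (simp add: sum_distrib_left)
  also have "\<dots> = (\<Sum>k<n. \<Sum>i<n. w i * (M k i * w k))" by (rule sum.swap)
  also have "\<dots> = vinner n w (mv n M w)"
    unfolding vinner_def mv_def by (simp add: sum_distrib_left mult_ac)
  finally show ?thesis .
qed

lemma sum_sq_shift:
  fixes a b :: "nat \<Rightarrow> real"
  shows "(\<Sum>i<n. (a i - g * b i)\<^sup>2) = (\<Sum>i<n. (a i)\<^sup>2) - 2*g*(\<Sum>i<n. b i * a i) + g\<^sup>2 * (\<Sum>i<n. (b i)\<^sup>2)"
proof -
  have "(\<Sum>i<n. (a i - g * b i)\<^sup>2) = (\<Sum>i<n. (a i)\<^sup>2 - 2*g*(b i * a i) + g\<^sup>2 * (b i)\<^sup>2)"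
    by (rule sum.cong) (simp_all add: power2_eq_square algebra_simps)
  also have "\<dots> = (\<Sum>i<n. (a i)\<^sup>2) - 2*g*(\<Sum>i<n. b i * a i) + g\<^sup>2 * (\<Sum>i<n. (b i)\<^sup>2)"
    by (simp add: sum.distrib sum_subtractf sum_distrib_left)
  finally show ?thesis .
qed

abbreviation rayleigh :: "nat \<Rightarrow> (nat \<Rightarrow> nat \<Rightarrow> real) \<Rightarrow> (nat \<Rightarrow> real) \<Rightarrow> real" where
  "rayleigh n M u \<equiv> vinner n u (mv n M u)"

definition half_step :: "nat \<Rightarrow> (nat \<Rightarrow> nat \<Rightarrow> real) \<Rightarrow> (nat \<Rightarrow> real) \<Rightarrow> (nat \<Rightarrow> real)" where
  "half_step n M u =
     (let \<alpha> = rayleigh n M u;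
          wt = (\<lambda>i. mv n M u i - \<alpha> * u i)
      in (\<lambda>i. wt i / vnorm n wt))"

lemma aci_step_eq_half_steps: "aci_step n A u = half_step n (mtrans A) (half_step n A u)"
  by (simp only: aci_step_def half_step_def Let_def vinner_mtrans)

definition mass_factor :: "real \<Rightarrow> real \<Rightarrow> real" where
  "mass_factor c g = (1 - 2*g*c + g\<^sup>2) / (1 - g\<^sup>2)"

lemma mass_factor_pos:
  fixes c g :: real
  assumes "c\<^sup>2 \<le> 1" "g\<^sup>2 < 1"
  shows "0 < mass_factor c g"
proof -
  have "\<bar>c\<bar> \<le> 1" "\<bar>g\<bar> < 1" using assms by (simp_all add: abs_square_le_1 abs_square_less_1)
  then have "\<bar>g*c\<bar> \<le> \<bar>g\<bar>" by (simp add: abs_mult mult_left_le)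
  then have "g*c \<le> \<bar>g\<bar>" by linarith
  moreover have "0 < (1 - \<bar>g\<bar>)\<^sup>2" using \<open>\<bar>g\<bar> < 1\<close> by simp
  ultimately have "0 < 1 - 2*g*c + g\<^sup>2" by (simp add: power2_eq_square algebra_simps)
  then show ?thesis using assms(2) by (simp add: mass_factor_def)
qed

lemma half_step_blockA:
  fixes hN hP :: bool and m l :: nat and c t u :: "nat \<Rightarrow> real"
  defines "n \<equiv> bdim hN hP m" and "M \<equiv> blockA hN hP m c t"
  defines "\<alpha> \<equiv> rayleigh n M u"
  assumes ct: "\<forall>j\<in>{1..m}. (c j)\<^sup>2 + (t j)\<^sup>2 = 1" and c0: "c 0 = -1" and cm: "c (Suc m) = 1"
    and l: "l \<in> {1..m}" "t l \<noteq> 0"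
    and unit: "(\<Sum>i<n. (u i)\<^sup>2) = 1" and mass_l: "0 < block_mass hN m u l"
  shows "\<alpha>\<^sup>2 < 1"
    and "(\<Sum>i<n. (half_step n M u i)\<^sup>2) = 1"
    and "block_present hN hP m j \<Longrightarrow> block_mass hN m (half_step n M u) j = mass_factor (c j) \<alpha> * block_mass hN m u j"
proof -
  define wt where "wt i = mv n M u i - \<alpha> * u i" for i
  have step: "half_step n M u = (\<lambda>i. wt i / vnorm n wt)"
    unfolding half_step_def wt_def \<alpha>_def Let_def ..
  have mass_wt: "block_mass hN m wt j = (1 - 2*\<alpha>*c j + \<alpha>\<^sup>2) * block_mass hN m u j"
    if "block_present hN hP m j" for j
    unfolding wt_def n_def M_def by (rule block_mass_shift[OF ct c0 cm that])
  have "(\<Sum>i<n. (mv n M u i)\<^sup>2) = 1" using sum_sq_mv_blockA[OF ct] unit unfolding n_def M_def by simp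
  then have norm_wt: "(\<Sum>i<n. (wt i)\<^sup>2) = 1 - \<alpha>\<^sup>2"
    unfolding wt_def sum_sq_shift unit \<alpha>_def vinner_def by (simp add: power2_eq_square)
  have present_l: "block_present hN hP m l" using l(1) by (rule block_present_rotation)
  have "1 - 2*\<alpha>*c l + \<alpha>\<^sup>2 = (\<alpha> - c l)\<^sup>2 + (t l)\<^sup>2"
    using ct l by (simp add: power2_eq_square algebra_simps)
  then have "0 < 1 - 2*\<alpha>*c l + \<alpha>\<^sup>2" using l(2) by (simp add: add_nonneg_pos)
  then have "0 < block_mass hN m wt l" using mass_wt[OF present_l] mass_l by simp
  also have "block_mass hN m wt l \<le> 1 - \<alpha>\<^sup>2"
    using block_mass_le_sum_sq[OF present_l] norm_wt unfolding n_def by metis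
  finally have pos: "0 < 1 - \<alpha>\<^sup>2" .
  then show "\<alpha>\<^sup>2 < 1" by simp
  have vnorm_sq: "(vnorm n wt)\<^sup>2 = 1 - \<alpha>\<^sup>2" unfolding vnorm_def norm_wt using pos by simp
  show "(\<Sum>i<n. (half_step n M u i)\<^sup>2) = 1"
    unfolding step using norm_wt vnorm_sq pos by (simp add: power_divide flip: sum_divide_distrib)
  assume "block_present hN hP m j"
  then show "block_mass hN m (half_step n M u) j = mass_factor (c j) \<alpha> * block_mass hN m u j"
    unfolding step block_mass_divide mass_wt[OF \<open>block_present hN hP m j\<close>] vnorm_sq
    by (simp add: mass_factor_def)
qed

lemma aci_step_blockA:
  fixes hN hP :: bool and m l :: nat and c s u :: "nat \<Rightarrow> real"
  defines "n \<equiv> bdim hN hP m" and "A \<equiv> blockA hN hP m c s"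
  defines "\<alpha> \<equiv> rayleigh n A u" and "\<beta> \<equiv> rayleigh n (mtrans A) (half_step n A u)"
  assumes cs: "\<forall>j\<in>{1..m}. (c j)\<^sup>2 + (s j)\<^sup>2 = 1" and c0: "c 0 = -1" and cm: "c (Suc m) = 1"
    and l: "l \<in> {1..m}" "s l \<noteq> 0"
    and unit: "(\<Sum>i<n. (u i)\<^sup>2) = 1" and mass_l: "0 < block_mass hN m u l"
  shows "\<alpha>\<^sup>2 < 1" and "\<beta>\<^sup>2 < 1"
    and "(\<Sum>i<n. (aci_step n A u i)\<^sup>2) = 1"
    and "block_present hN hP m j \<Longrightarrow> block_mass hN m (aci_step n A u) j
           = mass_factor (c j) \<alpha> * mass_factor (c j) \<beta> * block_mass hN m u j"
proof -
  define w where "w = half_step n A u"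
  have AT: "mtrans A = blockA hN hP m c (\<lambda>j. - s j)" unfolding A_def by (rule mtrans_blockA)
  have cs': "\<forall>j\<in>{1..m}. (c j)\<^sup>2 + (- s j)\<^sup>2 = 1" using cs by simp
  note first = half_step_blockA[OF cs c0 cm l unit[unfolded n_def] mass_l, folded n_def A_def, folded \<alpha>_def w_def]
  have present_l: "block_present hN hP m l" using l(1) by (rule block_present_rotation)
  have "(c l)\<^sup>2 \<le> 1" using block_present_cos_sq_le[OF cs c0 cm present_l] .
  then have mass_w: "0 < block_mass hN m w l"
    using first(1) first(3)[OF present_l] mass_l mass_factor_pos by simp
  have "- s l \<noteq> 0" using l(2) by simp
  note second = half_step_blockA[OF cs' c0 cm l(1) this first(2)[unfolded n_def] mass_w[unfolded n_def],
    folded n_def AT, folded w_def, folded \<beta>_def[folded w_def]]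
  show "\<alpha>\<^sup>2 < 1" by (fact first(1))
  show "\<beta>\<^sup>2 < 1" by (fact second(1))
  have step: "aci_step n A u = half_step n (mtrans A) w"
    unfolding w_def by (rule aci_step_eq_half_steps)
  show "(\<Sum>i<n. (aci_step n A u i)\<^sup>2) = 1" unfolding step by (fact second(2))
  show "block_mass hN m (aci_step n A u) j = mass_factor (c j) \<alpha> * mass_factor (c j) \<beta> * block_mass hN m u j"
    if "block_present hN hP m j"
    unfolding step second(3)[OF that] first(3)[OF that] by simp
qed

section \<open>The logarithmic gain\<close>

lemma one_plus_mult_pos:
  fixes a t :: real
  assumes "\<bar>a\<bar> \<le> 1" "\<bar>t\<bar> < 1"
  shows "0 < 1 + a * t"
proof -
  have "\<bar>a\<bar> * \<bar>t\<bar> \<le> \<bar>t\<bar>" using assms(1) by (simp add: mult_left_le_one_le)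
  then have "\<bar>a * t\<bar> < 1" using assms(2) by (simp add: abs_mult)
  then show ?thesis by linarith
qed

text \<open>With \<open>c\<^sub>x = -a\<close> and \<open>c\<^sub>y = b\<close>, \<open>log_gain a b p q g\<close> is the increase of
  \<open>p ln P\<^sub>x + q ln P\<^sub>y\<close> in a half step with Rayleigh quotient \<open>g\<close>.\<close>

definition log_gain :: "real \<Rightarrow> real \<Rightarrow> real \<Rightarrow> real \<Rightarrow> real \<Rightarrow> real" where
  "log_gain a b p q g = p * ln (mass_factor (- a) g) + q * ln (mass_factor b g)"

text \<open>The gain in the variable \<open>t = 2g / (1 + g\<^sup>2)\<close>; the balance \<open>p a = q b\<close> makes \<open>t = 0\<close> its
  only critical point.\<close>

definition gain_profile :: "real \<Rightarrow> real \<Rightarrow> real \<Rightarrow> real \<Rightarrow> real \<Rightarrow> real" where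
  "gain_profile a b p q t = p * ln (1 + a*t) + q * ln (1 - b*t) - (ln (1 - t) + ln (1 + t)) / 2"

lemma abs_two_div_one_plus_sq:
  fixes g :: real
  assumes "g\<^sup>2 < 1"
  shows "\<bar>2*g / (1 + g\<^sup>2)\<bar> < 1" and "\<bar>g\<bar> \<le> \<bar>2*g / (1 + g\<^sup>2)\<bar>"
proof -
  have pos: "0 < 1 + g\<^sup>2" by (simp add: add_pos_nonneg)
  have "\<bar>g\<bar> < 1" using assms by (simp add: abs_square_less_1)
  then have "0 < (1 - \<bar>g\<bar>)\<^sup>2" by simp
  then have "2*\<bar>g\<bar> < 1 + g\<^sup>2" by (simp add: power2_eq_square algebra_simps)
  then show "\<bar>2*g / (1 + g\<^sup>2)\<bar> < 1" using pos by (simp add: abs_mult field_simps)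
  have "\<bar>g\<bar> * (1 + g\<^sup>2) \<le> \<bar>g\<bar> * 2" using assms by (intro mult_left_mono) auto
  then show "\<bar>g\<bar> \<le> \<bar>2*g / (1 + g\<^sup>2)\<bar>" using pos by (simp add: abs_mult field_simps)
qed

lemma has_real_derivative_ln_affine:
  fixes k t :: real
  assumes "0 < 1 + k*t"
  shows "((\<lambda>x. ln (1 + k*x)) has_real_derivative k / (1 + k*t)) (at t)"
proof -
  have "((\<lambda>x. ln (1 + k*x)) has_real_derivative 1 / (1 + k*t) * k) (at t)"
    by (rule DERIV_chain2[where g="\<lambda>x. 1 + k*x", OF DERIV_ln_divide[OF assms]])
      (auto intro!: derivative_eq_intros)
  then show ?thesis by simp
qed

locale balanced_weights =
  fixes a b p q :: real
  assumes a: "0 \<le> a" "a \<le> 1" and b: "0 \<le> b" "b \<le> 1" and not_both_one: "\<not> (a = 1 \<and> b = 1)"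
    and weights: "p + q = 1" "p * a = q * b"
begin

lemma profile_denominators_pos:
  assumes "\<bar>t\<bar> < 1"
  shows "0 < 1 + a*t" "0 < 1 - b*t" "0 < 1 - t" "0 < 1 + t" "0 < 1 - t\<^sup>2"
  using one_plus_mult_pos[of a t] one_plus_mult_pos[of "-b" t] assms a b
  by (auto simp: abs_square_less_1)

lemma profile_factor_pos:
  assumes t: "\<bar>t\<bar> < 1"
  shows "0 < 1 / (1 - t\<^sup>2) - a*b / ((1 + a*t) * (1 - b*t))"
proof -
  note pos = profile_denominators_pos[OF t]
  have nonneg: "0 \<le> (1+t) * ((1+a)*(1-b))" "0 \<le> (1-t) * ((1-a)*(1+b))"
    using pos a b by simp_all
  have "0 < (1+t) * ((1+a)*(1-b)) \<or> 0 < (1-t) * ((1-a)*(1+b))"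
    using pos a b not_both_one by (cases "b = 1") simp_all
  then have "0 < (1+t) * ((1+a)*(1-b)) + (1-t) * ((1-a)*(1+b))"
    using nonneg add_pos_nonneg add_nonneg_pos by blast
  also have "\<dots> = 2 * (1 - a*b + (a-b)*t)"
    by (simp add: algebra_simps)
  finally have "0 < 1 - a*b + (a-b)*t" by simp
  then have "a*b * (1 - t\<^sup>2) < (1 + a*t) * (1 - b*t)"
    by (simp add: power2_eq_square algebra_simps)
  moreover have "0 < (1 + a*t) * (1 - b*t)" "0 < 1 - t\<^sup>2"
    using pos by simp_all
  moreover have "0 < 1 / E - x / D" if "x * E < D" "0 < D" "0 < E" for x D E :: real
  proof -
    have "1 / E - x / D = (D - x * E) / (D * E)" using that by (simp add: field_simps)
    then show ?thesis using that by simp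
  qed
  ultimately show ?thesis by blast
qed

lemma weights_balance: "p*a*(a+b) = a*b"
proof -
  have "p*a*(a+b) = (p*a)*a + p*a*b" by (simp add: algebra_simps)
  also have "\<dots> = (p + q)*a*b" using weights(2) by (simp add: algebra_simps)
  finally show ?thesis using weights(1) by simp
qed

lemma profile_derivative_eq:
  assumes t: "\<bar>t\<bar> < 1"
  shows "p * (a / (1 + a*t)) + q * (- b / (1 - b*t)) - (- 1 / (1 - t) + 1 / (1 + t)) / 2
    = t * (1 / (1 - t\<^sup>2) - a*b / ((1 + a*t) * (1 - b*t)))"
proof -
  note pos = profile_denominators_pos[OF t]
  have "q * (- b / (1 - b*t)) = - (p*a) / (1 - b*t)" using weights(2) by simp
  then have "p * (a / (1 + a*t)) + q * (- b / (1 - b*t)) = p*a * (1 / (1 + a*t) - 1 / (1 - b*t))"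
    by (simp add: right_diff_distrib)
  also have "1 / (1 + a*t) - 1 / (1 - b*t) = - ((a+b)*t) / ((1 + a*t) * (1 - b*t))"
    using pos by (simp add: field_simps)
  also have "p*a * (- ((a+b)*t) / ((1 + a*t) * (1 - b*t))) = - t * (p*a*(a+b) / ((1 + a*t) * (1 - b*t)))"
    by (simp add: algebra_simps)
  finally have first: "p * (a / (1 + a*t)) + q * (- b / (1 - b*t)) = - t * (a*b / ((1 + a*t) * (1 - b*t)))"
    unfolding weights_balance .
  have second: "(- 1 / (1 - t) + 1 / (1 + t)) / 2 = - t / ((1 - t) * (1 + t))"
    using pos(3,4) by (simp add: divide_simps)
  have "(1 - t) * (1 + t) = 1 - t\<^sup>2" by (simp add: power2_eq_square algebra_simps)
  then show ?thesis by (simp only: first second, simp add: algebra_simps)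
qed

lemma has_derivative_profile:
  assumes t: "\<bar>t\<bar> < 1"
  shows "(gain_profile a b p q has_real_derivative
           t * (1 / (1 - t\<^sup>2) - a*b / ((1 + a*t) * (1 - b*t)))) (at t)"
proof -
  note pos = profile_denominators_pos[OF t]
  have "((\<lambda>x. ln (1 + a*x)) has_real_derivative a / (1 + a*t)) (at t)"
    and "((\<lambda>x. ln (1 - b*x)) has_real_derivative - b / (1 - b*t)) (at t)"
    and "((\<lambda>x. ln (1 - x)) has_real_derivative - 1 / (1 - t)) (at t)"
    and "((\<lambda>x. ln (1 + x)) has_real_derivative 1 / (1 + t)) (at t)"
    using has_real_derivative_ln_affine[of a t] has_real_derivative_ln_affine[of "-b" t]
      has_real_derivative_ln_affine[of "-1" t] has_real_derivative_ln_affine[of 1 t] pos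
    by simp_all
  then have "(gain_profile a b p q has_real_derivative
           p * (a / (1 + a*t)) + q * (- b / (1 - b*t)) - (- 1 / (1 - t) + 1 / (1 + t)) / 2) (at t)"
    unfolding gain_profile_def[abs_def] by (intro DERIV_diff DERIV_add DERIV_cmult DERIV_cdivide)
  then show ?thesis unfolding profile_derivative_eq[OF t] .
qed

lemma profile_strict_mono:
  assumes "0 \<le> x" "x < y" "y < 1"
  shows "gain_profile a b p q x < gain_profile a b p q y"
proof (rule DERIV_pos_imp_increasing_open[OF assms(2)])
  fix z assume "x < z" "z < y"
  then have "\<bar>z\<bar> < 1" "0 < z" using assms by auto
  then show "\<exists>d. (gain_profile a b p q has_real_derivative d) (at z) \<and> 0 < d"
    using has_derivative_profile profile_factor_pos by (blast intro: mult_pos_pos)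
next
  have "\<bar>z\<bar> < 1" if "x \<le> z" "z \<le> y" for z using that assms by auto
  then show "continuous_on {x..y} (gain_profile a b p q)"
    using has_derivative_profile by (blast intro: DERIV_atLeastAtMost_imp_continuous_on)
qed

lemma profile_strict_antimono:
  assumes "-1 < x" "x < y" "y \<le> 0"
  shows "gain_profile a b p q y < gain_profile a b p q x"
proof (rule DERIV_neg_imp_decreasing_open[OF assms(2)])
  fix z assume "x < z" "z < y"
  then have "\<bar>z\<bar> < 1" "z < 0" using assms by auto
  then show "\<exists>d. (gain_profile a b p q has_real_derivative d) (at z) \<and> d < 0"
    using has_derivative_profile profile_factor_pos by (blast intro: mult_neg_pos)
next
  have "\<bar>z\<bar> < 1" if "x \<le> z" "z \<le> y" for z using that assms by auto
  then show "continuous_on {x..y} (gain_profile a b p q)"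
    using has_derivative_profile by (blast intro: DERIV_atLeastAtMost_imp_continuous_on)
qed

lemma profile_zero: "gain_profile a b p q 0 = 0"
  by (simp add: gain_profile_def)

lemma profile_nonneg:
  assumes "\<bar>t\<bar> < 1"
  shows "0 \<le> gain_profile a b p q t"
  using profile_strict_mono[of 0 t] profile_strict_antimono[of t 0] assms
  by (cases t "0::real" rule: linorder_cases) (auto simp: profile_zero)

lemma profile_bounded_away:
  assumes "0 < \<delta>" "\<delta> \<le> \<bar>t\<bar>" "\<bar>t\<bar> < 1"
  shows "min (gain_profile a b p q \<delta>) (gain_profile a b p q (- \<delta>)) \<le> gain_profile a b p q t"
  using profile_strict_mono[of \<delta> t] profile_strict_antimono[of t "- \<delta>"] assms
  by (cases "0 \<le> t") (auto simp: min_le_iff_disj le_less)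

lemma log_gain_eq_profile:
  assumes g: "g\<^sup>2 < 1"
  shows "log_gain a b p q g = gain_profile a b p q (2*g / (1 + g\<^sup>2))"
proof -
  define t where "t = 2*g / (1 + g\<^sup>2)"
  define R where "R = (1 + g\<^sup>2) / (1 - g\<^sup>2)"
  have "\<bar>t\<bar> < 1" unfolding t_def using abs_two_div_one_plus_sq(1)[OF g] .
  note pos = profile_denominators_pos[OF this]
  have g_pos: "0 < 1 + g\<^sup>2" "0 < 1 - g\<^sup>2" using g by (simp_all add: add_pos_nonneg)
  then have "0 < R" unfolding R_def by simp
  have "1 + a*t = (1 - 2*g*(-a) + g\<^sup>2) / (1 + g\<^sup>2)" "1 - b*t = (1 - 2*g*b + g\<^sup>2) / (1 + g\<^sup>2)"
    unfolding t_def using g_pos by (simp_all add: field_simps)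
  then have factors: "mass_factor (- a) g = (1 + a*t) * R" "mass_factor b g = (1 - b*t) * R"
    unfolding mass_factor_def R_def using g_pos by simp_all
  have "ln (1 - t) + ln (1 + t) = ln ((1 - t) * (1 + t))"
    using pos(3,4) by (rule ln_mult_pos[symmetric])
  also have "(1 - t) * (1 + t) = (1 / R)\<^sup>2"
    unfolding t_def R_def using g_pos by (simp add: field_simps power2_eq_square)
  also have "ln ((1 / R)\<^sup>2) = - 2 * ln R" using \<open>0 < R\<close> by (simp add: ln_realpow ln_div)
  finally have ln_sq: "ln (1 - t) + ln (1 + t) = - 2 * ln R" .
  have "ln ((1 + a*t) * R) = ln (1 + a*t) + ln R" "ln ((1 - b*t) * R) = ln (1 - b*t) + ln R"
    using pos \<open>0 < R\<close> by (simp_all add: ln_mult_pos)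
  then have "log_gain a b p q g = (p + q) * ln R + p * ln (1 + a*t) + q * ln (1 - b*t)"
    unfolding log_gain_def factors by (simp add: algebra_simps)
  also have "\<dots> = gain_profile a b p q t"
    unfolding gain_profile_def ln_sq weights(1) by simp
  finally show ?thesis unfolding t_def .
qed

lemma log_gain_nonneg: "g\<^sup>2 < 1 \<Longrightarrow> 0 \<le> log_gain a b p q g"
  using log_gain_eq_profile profile_nonneg abs_two_div_one_plus_sq(1) by simp

lemma log_gain_bounded_away:
  assumes "0 < \<delta>"
  obtains \<epsilon> where "0 < \<epsilon>" "\<And>g. g\<^sup>2 < 1 \<Longrightarrow> \<delta> \<le> \<bar>g\<bar> \<Longrightarrow> \<epsilon> \<le> log_gain a b p q g"
proof
  define \<delta>' where "\<delta>' = min \<delta> (1/2)"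
  have \<delta>': "0 < \<delta>'" "\<delta>' < 1" "\<delta>' \<le> \<delta>" using assms unfolding \<delta>'_def by auto
  show "0 < min (gain_profile a b p q \<delta>') (gain_profile a b p q (- \<delta>'))"
    using profile_strict_mono[of 0 \<delta>'] profile_strict_antimono[of "- \<delta>'" 0] \<delta>'
    by (simp add: profile_zero)
  fix g assume "g\<^sup>2 < 1" "\<delta> \<le> \<bar>g\<bar>"
  then show "min (gain_profile a b p q \<delta>') (gain_profile a b p q (- \<delta>')) \<le> log_gain a b p q g"
    using profile_bounded_away[of \<delta>' "2*g / (1 + g\<^sup>2)"] abs_two_div_one_plus_sq[of g] \<delta>'
    by (simp add: log_gain_eq_profile)
qed

end

section \<open>Convergence of the Rayleigh quotients\<close>

lemma tendsto_zero_of_bounded_gain: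
  fixes L G x :: "nat \<Rightarrow> real"
  assumes gain: "\<And>k. L k + G k \<le> L (Suc k)" and G_nonneg: "\<And>k. 0 \<le> G k"
    and bounded: "\<And>k. L k \<le> B"
    and away: "\<And>r. 0 < r \<Longrightarrow> \<exists>\<epsilon>>0. \<forall>k. r \<le> \<bar>x k\<bar> \<longrightarrow> \<epsilon> \<le> G k"
  shows "x \<longlonglongrightarrow> 0"
proof (rule LIMSEQ_I)
  have partial: "(\<Sum>i<k. G i) \<le> L k - L 0" for k
  proof (induction k)
    case (Suc k)
    then show ?case using gain[of k] by simp
  qed simp
  have "(\<Sum>i<k. G i) \<le> B - L 0" for k
    using partial[of k] bounded[of k] by linarith
  then have "summable G" using G_nonneg by (intro summableI_nonneg_bounded)
  then have "G \<longlonglongrightarrow> 0" by (rule summable_LIMSEQ_zero)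
  fix r :: real assume "0 < r"
  then obtain \<epsilon> where "0 < \<epsilon>" and \<epsilon>: "\<And>k. r \<le> \<bar>x k\<bar> \<Longrightarrow> \<epsilon> \<le> G k" using away by blast
  obtain N where N: "\<And>k. N \<le> k \<Longrightarrow> norm (G k - 0) < \<epsilon>"
    using LIMSEQ_D[OF \<open>G \<longlonglongrightarrow> 0\<close> \<open>0 < \<epsilon>\<close>] by blast
  have "norm (x k - 0) < r" if "N \<le> k" for k
    using N[OF that] \<epsilon>[of k] G_nonneg[of k] by fastforce
  then show "\<exists>N. \<forall>k\<ge>N. norm (x k - 0) < r" by blast
qed

lemma exists_balancing_weights:
  fixes a b :: real
  assumes "0 \<le> a" "0 \<le> b"
  obtains p q where "0 \<le> p" "0 \<le> q" "p + q = 1" "p * a = q * b"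
proof (cases "a + b = 0")
  case True
  then show thesis using assms by (intro that[of "1/2" "1/2"]) auto
next
  case False
  show thesis
  proof (rule that[of "b / (a + b)" "a / (a + b)"])
    show "b / (a + b) + a / (a + b) = 1" using False by (simp add: add_divide_distrib[symmetric])
  qed (use assms in simp_all)
qed

lemma exists_opposite_indices:
  fixes c :: "nat \<Rightarrow> real"
  assumes "P l" "P j" "(c l)\<^sup>2 < 1" "c l * c j \<le> 0"
  obtains x y where "P x" "P y" "c x \<le> 0" "0 \<le> c y" "\<not> (c x = -1 \<and> c y = 1)"
proof -
  have "c l \<noteq> -1" "c l \<noteq> 1" using assms(3) by auto
  consider "c l < 0" "0 \<le> c j" | "0 < c l" "c j \<le> 0" | "c l = 0"
    using assms(4) by (smt (verit) mult_neg_neg mult_pos_pos)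
  then show thesis
  proof cases
    case 1 then show thesis using that[of l j] assms \<open>c l \<noteq> -1\<close> by auto
  next
    case 2 then show thesis using that[of j l] assms \<open>c l \<noteq> 1\<close> by auto
  next
    case 3 then show thesis using that[of l l] assms by auto
  qed
qed

locale aci_block_setting =
  fixes hN hP :: bool and m l :: nat and c s v0 :: "nat \<Rightarrow> real"
  assumes rot: "\<forall>j\<in>{1..m}. (c j)\<^sup>2 + (s j)\<^sup>2 = 1" and c0: "c 0 = -1" and cm: "c (Suc m) = 1"
    and l: "l \<in> {1..m}" "s l \<noteq> 0"
    and unit: "(\<Sum>i<bdim hN hP m. (v0 i)\<^sup>2) = 1" and mass_l: "0 < block_mass hN m v0 l"
begin

abbreviation "A \<equiv> blockA hN hP m c s"
abbreviation "V \<equiv> aci_seq (bdim hN hP m) A v0"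
abbreviation "\<alpha> k \<equiv> rayleigh (bdim hN hP m) A (V k)"
abbreviation "\<beta> k \<equiv> rayleigh (bdim hN hP m) (mtrans A) (half_step (bdim hN hP m) A (V k))"

lemma V_Suc: "V (Suc k) = aci_step (bdim hN hP m) A (V k)"
  by (simp add: aci_seq_def)

lemma cos_sq_le: "block_present hN hP m j \<Longrightarrow> (c j)\<^sup>2 \<le> 1"
  using block_present_cos_sq_le[OF rot c0 cm] .

lemma unit_and_mass_l: "(\<Sum>i<bdim hN hP m. (V k i)\<^sup>2) = 1 \<and> 0 < block_mass hN m (V k) l"
proof (induction k)
  case 0
  show ?case using unit mass_l by (simp add: aci_seq_def)
next
  case (Suc k)
  then have unit_k: "(\<Sum>i<bdim hN hP m. (V k i)\<^sup>2) = 1" and mass_k: "0 < block_mass hN m (V k) l"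
    by auto
  note step = aci_step_blockA[OF rot c0 cm l unit_k mass_k]
  have present_l: "block_present hN hP m l" using l(1) by (rule block_present_rotation)
  have "0 < mass_factor (c l) (\<alpha> k) * mass_factor (c l) (\<beta> k) * block_mass hN m (V k) l"
    using mass_factor_pos[OF cos_sq_le[OF present_l]] step(1,2) mass_k by simp
  then show ?case using step(3) step(4)[OF present_l] by (simp add: V_Suc)
qed

lemma rayleigh_sq_less_1: "(\<alpha> k)\<^sup>2 < 1" "(\<beta> k)\<^sup>2 < 1"
  using aci_step_blockA(1,2)[OF rot c0 cm l] unit_and_mass_l by blast+

lemma mass_recurrence:
  "block_present hN hP m j \<Longrightarrow>
    block_mass hN m (V (Suc k)) j = mass_factor (c j) (\<alpha> k) * mass_factor (c j) (\<beta> k) * block_mass hN m (V k) j"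
  using aci_step_blockA(4)[OF rot c0 cm l] unit_and_mass_l by (simp add: V_Suc)

lemma mass_pos:
  assumes "block_present hN hP m j" "0 < block_mass hN m v0 j"
  shows "0 < block_mass hN m (V k) j"
proof (induction k)
  case 0
  then show ?case using assms(2) by (simp add: aci_seq_def)
next
  case (Suc k)
  then show ?case
    using mass_recurrence[OF assms(1)] mass_factor_pos[OF cos_sq_le[OF assms(1)]] rayleigh_sq_less_1
    by simp
qed

lemma ln_mass_recurrence:
  assumes "block_present hN hP m j" "0 < block_mass hN m v0 j"
  shows "ln (block_mass hN m (V (Suc k)) j)
    = ln (mass_factor (c j) (\<alpha> k)) + ln (mass_factor (c j) (\<beta> k)) + ln (block_mass hN m (V k) j)"
  using mass_recurrence[OF assms(1)] mass_pos[OF assms] rayleigh_sq_less_1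
    mass_factor_pos[OF cos_sq_le[OF assms(1)]]
  by (simp add: ln_mult_pos)

lemma mass_le_1: "block_present hN hP m j \<Longrightarrow> block_mass hN m (V k) j \<le> 1"
  using block_mass_le_sum_sq unit_and_mass_l by metis

lemma rayleigh_tendsto_zero:
  assumes x: "block_present hN hP m x" "0 < block_mass hN m v0 x" "c x \<le> 0"
    and y: "block_present hN hP m y" "0 < block_mass hN m v0 y" "0 \<le> c y"
    and not_extreme: "\<not> (c x = -1 \<and> c y = 1)"
  shows "(\<lambda>k. \<alpha> k) \<longlonglongrightarrow> 0"
proof -
  define a where "a = - c x"
  define b where "b = c y"
  have "\<bar>c x\<bar> \<le> 1" "\<bar>c y\<bar> \<le> 1"
    using cos_sq_le[OF x(1)] cos_sq_le[OF y(1)] by (simp_all add: abs_square_le_1)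
  then have ab: "0 \<le> a" "a \<le> 1" "0 \<le> b" "b \<le> 1" "\<not> (a = 1 \<and> b = 1)"
    using x(3) y(3) not_extreme unfolding a_def b_def by auto
  obtain p q where pq: "0 \<le> p" "0 \<le> q" "p + q = 1" "p * a = q * b"
    using exists_balancing_weights[OF ab(1,3)] .
  interpret balanced_weights a b p q
    using ab pq by unfold_locales auto
  define L where "L k = p * ln (block_mass hN m (V k) x) + q * ln (block_mass hN m (V k) y)" for k
  have "L (Suc k) = L k + log_gain a b p q (\<alpha> k) + log_gain a b p q (\<beta> k)" for k
    unfolding L_def log_gain_def ln_mass_recurrence[OF x(1,2)] ln_mass_recurrence[OF y(1,2)]
    by (simp add: a_def b_def algebra_simps)
  then have gain: "L k + log_gain a b p q (\<alpha> k) \<le> L (Suc k)" for k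
    using log_gain_nonneg[OF rayleigh_sq_less_1(2)] by simp
  have bounded: "L k \<le> 0" for k
  proof -
    have "ln (block_mass hN m (V k) x) \<le> 0" "ln (block_mass hN m (V k) y) \<le> 0"
      using mass_le_1[OF x(1)] mass_le_1[OF y(1)] mass_pos[OF x(1,2)] mass_pos[OF y(1,2)] by simp_all
    then show ?thesis unfolding L_def using pq(1,2) by (simp add: add_nonpos_nonpos mult_nonneg_nonpos)
  qed
  show ?thesis
  proof (rule tendsto_zero_of_bounded_gain[where G = "\<lambda>k. log_gain a b p q (\<alpha> k)"])
    show "L k + log_gain a b p q (\<alpha> k) \<le> L (Suc k)" "0 \<le> log_gain a b p q (\<alpha> k)" "L k \<le> 0" for k
      using gain bounded log_gain_nonneg[OF rayleigh_sq_less_1(1)] by auto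
  next
    fix r :: real assume "0 < r"
    then obtain \<epsilon> where "0 < \<epsilon>" "\<And>g. g\<^sup>2 < 1 \<Longrightarrow> r \<le> \<bar>g\<bar> \<Longrightarrow> \<epsilon> \<le> log_gain a b p q g"
      using log_gain_bounded_away by blast
    then show "\<exists>\<epsilon>>0. \<forall>k. r \<le> \<bar>\<alpha> k\<bar> \<longrightarrow> \<epsilon> \<le> log_gain a b p q (\<alpha> k)"
      using rayleigh_sq_less_1(1) by blast
  qed
qed

end

section \<open>Limit vectors and the operator norm\<close>

lemma vnorm_eq_1_iff: "vnorm n x = 1 \<longleftrightarrow> (\<Sum>i<n. (x i)\<^sup>2) = 1"
  unfolding vnorm_def by (metis real_sqrt_eq_1_iff)

lemma limit_vector_unit_rayleigh_zero:
  assumes lim: "limit_vector n vs v"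
    and unit: "\<And>k. (\<Sum>i<n. (vs k i)\<^sup>2) = 1"
    and rayleigh_zero: "(\<lambda>k. rayleigh n M (vs k)) \<longlonglongrightarrow> 0"
  shows "(\<Sum>i<n. (v i)\<^sup>2) = 1" and "rayleigh n M v = 0"
proof -
  obtain r where r: "strict_mono r" and conv: "\<And>i. i < n \<Longrightarrow> (\<lambda>k. vs (r k) i) \<longlonglongrightarrow> v i"
    using lim unfolding limit_vector_def by blast
  have "(\<lambda>k. \<Sum>i<n. (vs (r k) i)\<^sup>2) \<longlonglongrightarrow> (\<Sum>i<n. (v i)\<^sup>2)"
    using conv by (auto intro!: tendsto_sum tendsto_power)
  then show "(\<Sum>i<n. (v i)\<^sup>2) = 1" using unit by (simp add: LIMSEQ_const_iff)
  have "rayleigh n M u = (\<Sum>i<n. u i * (\<Sum>k<n. M i k * u k))" for u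
    unfolding vinner_def mv_def by (rule sum.cong) auto
  then have "(\<lambda>k. rayleigh n M (vs (r k))) \<longlonglongrightarrow> rayleigh n M v"
    using conv by (auto intro!: tendsto_sum tendsto_mult)
  moreover have "(\<lambda>k. rayleigh n M (vs (r k))) \<longlonglongrightarrow> 0"
    using LIMSEQ_subseq_LIMSEQ[OF rayleigh_zero r] by (simp add: o_def)
  ultimately show "rayleigh n M v = 0" by (rule LIMSEQ_unique)
qed

lemma mv_shift:
  assumes "i < n"
  shows "mv n (\<lambda>i k. M i k - a * (if i = k then 1 else 0)) x i = mv n M x i - a * x i"
proof -
  have "(M i k - a * (if i = k then 1 else 0)) * x k = M i k * x k - (if k = i then a * x i else 0)" for k
    by (auto simp: algebra_simps)
  then show ?thesis using assms by (simp add: mv_def sum_subtractf)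
qed

lemma opnorm_isometry:
  assumes iso: "\<And>x. (\<Sum>i<n. (mv n M x i)\<^sup>2) = (\<Sum>i<n. (x i)\<^sup>2)" and v: "vnorm n v = 1"
  shows "opnorm n M = 1"
proof -
  have "{vnorm n (mv n M x) | x. vnorm n x = 1} = {1}"
    using iso v by (auto simp: vnorm_def)
  then show ?thesis unfolding opnorm_def by simp
qed

lemma opnorm_isometry_shift_ge:
  assumes iso: "\<And>x. (\<Sum>i<n. (mv n M x i)\<^sup>2) = (\<Sum>i<n. (x i)\<^sup>2)"
    and v: "(\<Sum>i<n. (v i)\<^sup>2) = 1" and rayleigh_zero: "rayleigh n M v = 0"
  shows "sqrt (1 + a\<^sup>2) \<le> opnorm n (\<lambda>i k. M i k - a * (if i = k then 1 else 0))"
proof -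
  let ?S = "\<lambda>i k. M i k - a * (if i = k then 1 else 0)"
  have sq: "(\<Sum>i<n. (mv n ?S x i)\<^sup>2) = (\<Sum>i<n. (mv n M x i - a * x i)\<^sup>2)" for x
    by (rule sum.cong) (simp_all add: mv_shift)
  have "vnorm n (mv n ?S x) \<le> sqrt (2 + 2*a\<^sup>2)" if "vnorm n x = 1" for x
  proof -
    have "(\<Sum>i<n. (mv n M x i - a * x i)\<^sup>2) \<le> (\<Sum>i<n. 2*(mv n M x i)\<^sup>2 + 2*a\<^sup>2*(x i)\<^sup>2)"
    proof (rule sum_mono)
      fix i
      have "0 \<le> (mv n M x i + a * x i)\<^sup>2" by simp
      then show "(mv n M x i - a * x i)\<^sup>2 \<le> 2*(mv n M x i)\<^sup>2 + 2*a\<^sup>2*(x i)\<^sup>2"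
        by (simp add: power2_eq_square algebra_simps)
    qed
    also have "\<dots> = 2 + 2*a\<^sup>2"
      using iso[of x] that by (simp add: vnorm_eq_1_iff sum.distrib flip: sum_distrib_left)
    finally show ?thesis unfolding vnorm_def sq by simp
  qed
  then have "bdd_above {vnorm n (mv n ?S x) | x. vnorm n x = 1}"
    by (auto intro!: bdd_aboveI[where M = "sqrt (2 + 2*a\<^sup>2)"])
  moreover have "vnorm n (mv n ?S v) \<in> {vnorm n (mv n ?S x) | x. vnorm n x = 1}"
    using v by (auto simp: vnorm_eq_1_iff)
  moreover have "vnorm n (mv n ?S v) = sqrt (1 + a\<^sup>2)"
    unfolding vnorm_def sq sum_sq_shift iso v using rayleigh_zero by (simp add: vinner_def)
  ultimately show ?thesis unfolding opnorm_def by (simp add: cSup_upper2)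
qed

lemma INF_opnorm_isometry_shift:
  assumes iso: "\<And>x. (\<Sum>i<n. (mv n M x i)\<^sup>2) = (\<Sum>i<n. (x i)\<^sup>2)"
    and v: "(\<Sum>i<n. (v i)\<^sup>2) = 1" and rayleigh_zero: "rayleigh n M v = 0"
  shows "(INF a. opnorm n (\<lambda>i k. M i k - a * (if i = k then 1 else 0))) = 1"
proof (rule cInf_eq_minimum)
  show "1 \<in> range (\<lambda>a. opnorm n (\<lambda>i k. M i k - a * (if i = k then 1 else 0)))"
    using opnorm_isometry[OF iso] v by (auto simp: vnorm_eq_1_iff intro!: image_eqI[of _ _ 0])
  fix y assume "y \<in> range (\<lambda>a. opnorm n (\<lambda>i k. M i k - a * (if i = k then 1 else 0)))"
  then obtain a where "y = opnorm n (\<lambda>i k. M i k - a * (if i = k then 1 else 0))" by blast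
  moreover have "1 \<le> sqrt (1 + a\<^sup>2)" by simp
  ultimately show "1 \<le> y" using opnorm_isometry_shift_ge[OF iso v rayleigh_zero, of a] by linarith
qed

theorem mainTheorem15:
  fixes hasNeg hasPos :: bool and m :: nat and c s :: "nat \<Rightarrow> real"
    and v0 vstar :: "nat \<Rightarrow> real"
  defines "n \<equiv> bdim hasNeg hasPos m"
      and "A \<equiv> blockA hasNeg hasPos m c s"
  assumes m: "m \<ge> 1"
    and cs: "\<forall>j\<in>{1..m}. (c j)\<^sup>2 + (s j)\<^sup>2 = 1 \<and> s j \<noteq> 0"
    and c0: "c 0 = -1" and cm1: "c (m + 1) = 1"
    and cmono: "\<forall>j\<le>m. c j < c (j + 1)"
    and v0unit: "vnorm n v0 = 1"
    and grade: "grade n A v0 \<ge> 2"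
    and nz: "\<exists>l\<in>{1..m}. block_nz hasNeg hasPos m v0 l \<and>
               (\<exists>j\<in>{0..m+1}. block_nz hasNeg hasPos m v0 j \<and> c l * c j \<le> 0)"
    and lim: "limit_vector n (aci_seq n A v0) vstar"
  shows "vinner n vstar (mv n A vstar) = 0
       \<and> (vnorm n (mv n A vstar))\<^sup>2 - (vinner n vstar (mv n A vstar))\<^sup>2 = 1
       \<and> (INF \<alpha>. opnorm n (\<lambda>i k. A i k - \<alpha> * (if i = k then 1 else 0))) = opnorm n A
       \<and> opnorm n A = vnorm n (mv n A vstar)
       \<and> vnorm n (mv n A vstar) = 1"
proof -
  have rot: "\<forall>j\<in>{1..m}. (c j)\<^sup>2 + (s j)\<^sup>2 = 1" using cs by auto
  obtain l j where l: "l \<in> {1..m}" and nz_l: "block_nz hasNeg hasPos m v0 l"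
    and nz_j: "block_nz hasNeg hasPos m v0 j" and sign: "c l * c j \<le> 0"
    using nz by blast
  interpret aci_block_setting hasNeg hasPos m l c s v0
    using rot c0 cm1 l cs v0unit block_nz_imp_mass_pos(2)[OF nz_l]
    by unfold_locales (auto simp: n_def vnorm_eq_1_iff)
  have "(c l)\<^sup>2 + (s l)\<^sup>2 = 1" "0 < (s l)\<^sup>2" using cs l by auto
  then have "(c l)\<^sup>2 < 1" by linarith
  then obtain x y where
    x: "block_present hasNeg hasPos m x" "0 < block_mass hasNeg m v0 x" "c x \<le> 0" and
    y: "block_present hasNeg hasPos m y" "0 < block_mass hasNeg m v0 y" "0 \<le> c y" and
    not_extreme: "\<not> (c x = -1 \<and> c y = 1)"
    using exists_opposite_indices[where P = "\<lambda>j. block_present hasNeg hasPos m j \<and> 0 < block_mass hasNeg m v0 j"]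
      block_nz_imp_mass_pos[OF nz_l] block_nz_imp_mass_pos[OF nz_j] sign
    by metis
  have iso: "\<And>u. (\<Sum>i<n. (mv n A u i)\<^sup>2) = (\<Sum>i<n. (u i)\<^sup>2)"
    unfolding n_def A_def using sum_sq_mv_blockA[OF rot] .
  note vstar = limit_vector_unit_rayleigh_zero[OF lim[unfolded n_def A_def]
      unit_and_mass_l[THEN conjunct1] rayleigh_tendsto_zero[OF x y not_extreme], folded n_def A_def]
  show ?thesis
    using vstar iso[of vstar] opnorm_isometry[OF iso] INF_opnorm_isometry_shift[OF iso vstar]
    by (simp add: vnorm_def)
qed

end
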